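(* Let $X\in\tilde{\mathcal{A}}_{conv.}$ and $\lambda\in\mathbb{C}$. Then there exist a unique $Q\in\tilde{\mathcal{A}}_{conv.}$ and a unique $R\in B$ such that $X=Q(a-\lambda b)+R$ in $\tilde{\mathcal{A}}_{conv.}$.
   Context: $\widehat{\mathcal{A}}$ is the algebra of formal power series $\sum_{p,q\ge0}\gamma_{p,q}a^pb^q$ in variables $a,b$ with $ab-ba=b^2$ (the $(a,b)$-adic completion of the polynomial algebra with this relation). $\tilde{\mathcal{A}}_{conv.}\subset\widehat{\mathcal{A}}$ is the subalgebra of series with $|\gamma_{p,q}|\le C_RR^{p+q}q!$ for some $R>1$, $C_R>0$. $B=\mathbb{C}\{\{b\}\}\subset\tilde{\mathcal{A}}_{conv.}$ is the subalgebra of series $\sum c_qb^q$ with $|c_q|\le CR^qq!$ for some $C,R$. *)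

theory Defs
  imports Complex_Main
begin

text \<open>An element of the completed algebra \<open>\<widehat>A\<close> is represented by its family of
  normal-ordered coefficients: \<open>X p q\<close> is the coefficient of \<open>a^p b^q\<close>.\<close>
type_synonym ser = "nat \<Rightarrow> nat \<Rightarrow> complex"

definition ser_add :: "ser \<Rightarrow> ser \<Rightarrow> ser" where
  "ser_add X Y = (\<lambda>p q. X p q + Y p q)"

text \<open>Right multiplication by \<open>a\<close>. From \<open>ab - ba = b^2\<close> one gets
  \<open>b^j a = a b^j - j b^(j+1)\<close>, hence \<open>a^i b^j a = a^(i+1) b^j - j a^i b^(j+1)\<close>.\<close>
definition right_a :: "ser \<Rightarrow> ser" where
  "right_a X = (\<lambda>i j. (if 0 < i then X (i - 1) j else 0)
                     - (if 0 < j then of_nat (j - 1) * X i (j - 1) else 0))"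

text \<open>Product in \<open>\<widehat>A\<close>: \<open>X \<cdot> Y = \<Sum>_{r,s} Y_{r,s} (X a^r) b^s\<close>; the coefficient of
  \<open>a^m b^n\<close> only involves finitely many terms (\<open>s \<le> n\<close>, \<open>r \<le> m + n - s\<close>),
  since the relation is homogeneous.\<close>
definition ser_mult :: "ser \<Rightarrow> ser \<Rightarrow> ser" where
  "ser_mult X Y = (\<lambda>m n. \<Sum>s\<le>n. \<Sum>r\<le>m + n - s. Y r s * ((right_a ^^ r) X) m (n - s))"

definition a_minus_lb :: "complex \<Rightarrow> ser" where
  "a_minus_lb l = (\<lambda>p q. if p = 1 \<and> q = 0 then 1 else if p = 0 \<and> q = 1 then - l else 0)"

definition conv :: "ser \<Rightarrow> bool" where
  "conv X \<longleftrightarrow> (\<exists>R C. R > 1 \<and> C > 0 \<and>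
      (\<forall>p q. norm (X p q) \<le> C * R ^ (p + q) * fact q))"

definition in_B :: "ser \<Rightarrow> bool" where
  "in_B X \<longleftrightarrow> (\<forall>p q. 0 < p \<longrightarrow> X p q = 0) \<and>
      (\<exists>C R. \<forall>q. norm (X 0 q) \<le> C * R ^ q * fact q)"

end

theory Submission
  imports Defs
begin

text \<open>Coefficientwise, \<open>(Q (a - \<lambda>b))\<^sub>m\<^sub>,\<^sub>n = Q\<^sub>m\<^sub>-\<^sub>1\<^sub>,\<^sub>n - (n - 1 + \<lambda>) Q\<^sub>m\<^sub>,\<^sub>n\<^sub>-\<^sub>1\<close>.
  Hence \<open>X = Q (a - \<lambda>b) + R\<close> with \<open>R\<close> supported on \<open>p = 0\<close> says exactly
  \<open>Q\<^sub>p\<^sub>,\<^sub>q = X\<^sub>p\<^sub>+\<^sub>1\<^sub>,\<^sub>q + (q - 1 + \<lambda>) Q\<^sub>p\<^sub>+\<^sub>1\<^sub>,\<^sub>q\<^sub>-\<^sub>1\<close>, a recursion in \<open>q\<close> which determines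
  \<open>Q\<close>, and then \<open>R\<close>, uniquely. Each step of the recursion costs one factor \<open>q + \<lambda>\<close> but
  moves one step up in \<open>p\<close>; if \<open>\<bar>X\<^sub>p\<^sub>,\<^sub>q\<bar> \<le> C \<rho>\<^sup>p\<^sup>+\<^sup>q q!\<close>, weighting the estimates by
  \<open>\<rho>\<^sup>p T\<^sup>q\<close> with \<open>T = 2 (1 + \<bar>\<lambda>\<bar>) \<rho>\<close> therefore preserves the factorial growth in \<open>q\<close>.\<close>

lemma ser_mult_a_minus_lb:
  "ser_mult X (a_minus_lb l) m n =
     (if 0 < m then X (m - 1) n else 0) - (if 0 < n then (of_nat (n - 1) + l) * X m (n - 1) else 0)"
proof -
  have inner: "(\<Sum>r\<le>k. a_minus_lb l r s * f r) =
      (if s = 0 then if 1 \<le> k then f 1 else 0 else 0) - (if s = 1 then l * f 0 else 0)" for k s f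
  proof -
    have "a_minus_lb l r s * f r =
        (if r = 1 then if s = 0 then f r else 0 else 0) - (if r = 0 then if s = 1 then l * f r else 0 else 0)" for r
      by (simp add: a_minus_lb_def)
    then show ?thesis
      by (simp add: sum_subtractf sum.delta)
  qed
  show ?thesis
    unfolding ser_mult_def inner
    by (simp add: sum_subtractf sum.delta right_a_def algebra_simps)
qed

fun quot_a_minus_lb :: "ser \<Rightarrow> complex \<Rightarrow> ser" where
  "quot_a_minus_lb X l p 0 = X (Suc p) 0"
| "quot_a_minus_lb X l p (Suc q) = X (Suc p) (Suc q) + (of_nat q + l) * quot_a_minus_lb X l (Suc p) q"

definition rem_a_minus_lb :: "ser \<Rightarrow> complex \<Rightarrow> ser" where
  "rem_a_minus_lb X l = (\<lambda>p q. X p q - ser_mult (quot_a_minus_lb X l) (a_minus_lb l) p q)"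

lemma ser_add_mult_rem_a_minus_lb:
  "X = ser_add (ser_mult (quot_a_minus_lb X l) (a_minus_lb l)) (rem_a_minus_lb X l)"
  by (simp add: ser_add_def rem_a_minus_lb_def)

lemma rem_a_minus_lb_eq:
  "rem_a_minus_lb X l p q =
     (if p = 0 then X 0 q + (if 0 < q then (of_nat (q - 1) + l) * quot_a_minus_lb X l 0 (q - 1) else 0)
      else 0)"
  by (cases p; cases q) (simp_all add: rem_a_minus_lb_def ser_mult_a_minus_lb)

lemma division_by_a_minus_lb_unique:
  assumes R: "\<And>p q. 0 < p \<Longrightarrow> R p q = 0"
    and X: "X = ser_add (ser_mult Q (a_minus_lb l)) R"
  shows "Q = quot_a_minus_lb X l" and "R = rem_a_minus_lb X l"
proof -
  have X_Suc: "X (Suc p) q = ser_mult Q (a_minus_lb l) (Suc p) q" for p q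
    using R[of "Suc p" q] by (simp add: X ser_add_def)
  have "Q p q = quot_a_minus_lb X l p q" for p q
  proof (induction q arbitrary: p)
    case 0
    show ?case by (simp add: X_Suc ser_mult_a_minus_lb)
  next
    case (Suc q)
    show ?case by (simp add: X_Suc ser_mult_a_minus_lb Suc.IH)
  qed
  then show Q: "Q = quot_a_minus_lb X l" by blast
  have "rem_a_minus_lb X l = (\<lambda>p q. X p q - ser_mult Q (a_minus_lb l) p q)"
    unfolding rem_a_minus_lb_def by (simp only: Q[symmetric])
  also have "\<dots> = R"
    by (simp add: X ser_add_def)
  finally show "R = rem_a_minus_lb X l" ..
qed

lemma conv_if_norm_le:
  fixes C R T :: real
  assumes X: "\<And>p q. norm (X p q) \<le> C * R ^ p * T ^ q * fact q"
  shows "conv X"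
proof -
  define S where "S = 2 + \<bar>R\<bar> + \<bar>T\<bar>"
  have "norm (X p q) \<le> (1 + \<bar>C\<bar>) * S ^ (p + q) * fact q" for p q
  proof -
    have "C * R ^ p * T ^ q \<le> \<bar>C\<bar> * \<bar>R\<bar> ^ p * \<bar>T\<bar> ^ q"
      by (metis abs_ge_self abs_mult power_abs)
    also have "\<dots> \<le> (1 + \<bar>C\<bar>) * S ^ p * S ^ q"
      unfolding S_def by (intro mult_mono power_mono) auto
    finally show ?thesis
      using X[of p q] by (simp add: power_add mult.assoc mult_right_mono order_trans)
  qed
  moreover have "S > 1" by (simp add: S_def)
  ultimately show ?thesis
    unfolding conv_def by (intro exI[of _ S] exI[of _ "1 + \<bar>C\<bar>"]) auto
qed

lemma norm_of_nat_add_le: "norm (of_nat n + z :: complex) \<le> (1 + norm z) * of_nat (Suc n)"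
proof -
  have "norm (of_nat n + z) \<le> of_nat n + norm z"
    using norm_triangle_ineq[of "of_nat n" z] by simp
  also have "\<dots> \<le> (1 + norm z) * of_nat (Suc n)"
    by (simp add: algebra_simps)
  finally show ?thesis .
qed

text \<open>With \<open>T = 2 (1 + L) R\<close>, each of the two terms of the recursion for the quotient
  contributes at most \<open>T\<^sup>q\<^sup>+\<^sup>1 / 2\<close>.\<close>
lemma power_Suc_add_le_weight:
  fixes R L :: real
  assumes "0 \<le> R" "0 \<le> L"
  shows "R ^ Suc q + (1 + L) * R * (2 * (1 + L) * R) ^ q \<le> (2 * (1 + L) * R) ^ Suc q"
proof -
  define T where "T = 2 * (1 + L) * R"
  have "2 * R ^ Suc q \<le> 2 ^ Suc q * R ^ Suc q"
    using assms by (intro mult_right_mono) auto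
  also have "\<dots> = (2 * R) ^ Suc q"
    by (simp only: power_mult_distrib)
  also have "\<dots> \<le> T ^ Suc q"
    unfolding T_def using assms by (intro power_mono mult_right_mono) auto
  finally have "2 * R ^ Suc q \<le> T ^ Suc q" .
  moreover have "T ^ Suc q = 2 * ((1 + L) * R * T ^ q)"
    by (simp add: T_def)
  ultimately show ?thesis
    unfolding T_def[symmetric] by linarith
qed

lemma norm_quot_a_minus_lb_le:
  fixes C R :: real and l :: complex
  assumes "0 \<le> C" "0 \<le> R" and X: "\<And>p q. norm (X p q) \<le> C * R ^ (p + q) * fact q"
  defines "T \<equiv> 2 * (1 + norm l) * R"
  shows "norm (quot_a_minus_lb X l p q) \<le> C * R ^ Suc p * T ^ q * fact q"
proof (induction q arbitrary: p)
  case 0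
  show ?case using X[of "Suc p" 0] by simp
next
  case (Suc q)
  have "norm (quot_a_minus_lb X l p (Suc q))
      \<le> norm (X (Suc p) (Suc q)) + norm (of_nat q + l) * norm (quot_a_minus_lb X l (Suc p) q)"
    by (simp add: norm_triangle_le norm_mult)
  also have "\<dots> \<le> C * R ^ (Suc p + Suc q) * fact (Suc q)
      + (1 + norm l) * of_nat (Suc q) * (C * R ^ Suc (Suc p) * T ^ q * fact q)"
    by (intro add_mono mult_mono X Suc.IH norm_of_nat_add_le) simp_all
  also have "\<dots> = C * R ^ Suc p * fact (Suc q) * (R ^ Suc q + (1 + norm l) * R * T ^ q)"
    by (simp add: power_add algebra_simps)
  also have "\<dots> \<le> C * R ^ Suc p * fact (Suc q) * T ^ Suc q"
    unfolding T_def using assms(1,2) by (intro mult_left_mono power_Suc_add_le_weight) auto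
  finally show ?case by (simp add: algebra_simps)
qed

lemma conv_quot_a_minus_lb:
  assumes "conv X"
  shows "conv (quot_a_minus_lb X l)"
proof -
  obtain R C :: real where "R > 1" "C > 0" and X: "\<And>p q. norm (X p q) \<le> C * R ^ (p + q) * fact q"
    using assms unfolding conv_def by blast
  then have "norm (quot_a_minus_lb X l p q) \<le> (C * R) * R ^ p * (2 * (1 + norm l) * R) ^ q * fact q"
    for p q
    using norm_quot_a_minus_lb_le[of C R X l p q] by (simp add: mult.assoc)
  then show ?thesis by (rule conv_if_norm_le)
qed

lemma in_B_rem_a_minus_lb:
  assumes "conv X"
  shows "in_B (rem_a_minus_lb X l)"
proof -
  obtain R C :: real where "R > 1" "C > 0" and X: "\<And>p q. norm (X p q) \<le> C * R ^ (p + q) * fact q"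
    using assms unfolding conv_def by blast
  define T where "T = 2 * (1 + norm l) * R"
  have "norm (rem_a_minus_lb X l 0 q) \<le> C * T ^ q * fact q" for q
  proof (cases q)
    case 0
    then show ?thesis using X[of 0 0] by (simp add: rem_a_minus_lb_eq)
  next
    case (Suc k)
    have "norm (rem_a_minus_lb X l 0 q)
        \<le> norm (X 0 (Suc k)) + norm (of_nat k + l) * norm (quot_a_minus_lb X l 0 k)"
      by (simp add: Suc rem_a_minus_lb_eq norm_triangle_le norm_mult)
    also have "\<dots> \<le> C * R ^ (0 + Suc k) * fact (Suc k)
        + (1 + norm l) * of_nat (Suc k) * (C * R ^ Suc 0 * T ^ k * fact k)"
      unfolding T_def using \<open>R > 1\<close> \<open>C > 0\<close>
      by (intro add_mono mult_mono X norm_quot_a_minus_lb_le norm_of_nat_add_le) simp_all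
    also have "\<dots> = C * fact (Suc k) * (R ^ Suc k + (1 + norm l) * R * T ^ k)"
      by (simp add: algebra_simps)
    also have "\<dots> \<le> C * fact (Suc k) * T ^ Suc k"
      unfolding T_def using \<open>R > 1\<close> \<open>C > 0\<close> by (intro mult_left_mono power_Suc_add_le_weight) auto
    finally show ?thesis by (simp add: Suc algebra_simps)
  qed
  moreover have "\<forall>p q. 0 < p \<longrightarrow> rem_a_minus_lb X l p q = 0"
    by (simp add: rem_a_minus_lb_eq)
  ultimately show ?thesis
    unfolding in_B_def by blast
qed

theorem proposition1p2p3:
  fixes X :: ser and l :: complex
  assumes "conv X"
  shows "\<exists>Q R. conv Q \<and> in_B R \<and> X = ser_add (ser_mult Q (a_minus_lb l)) R \<and>
           (\<forall>Q' R'. conv Q' \<and> in_B R' \<and> X = ser_add (ser_mult Q' (a_minus_lb l)) R'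
                \<longrightarrow> Q' = Q \<and> R' = R)"
proof (intro exI conjI allI impI)
  show "conv (quot_a_minus_lb X l)" using assms by (rule conv_quot_a_minus_lb)
  show "in_B (rem_a_minus_lb X l)" using assms by (rule in_B_rem_a_minus_lb)
  show "X = ser_add (ser_mult (quot_a_minus_lb X l) (a_minus_lb l)) (rem_a_minus_lb X l)"
    by (rule ser_add_mult_rem_a_minus_lb)
next
  fix Q' R'
  assume "conv Q' \<and> in_B R' \<and> X = ser_add (ser_mult Q' (a_minus_lb l)) R'"
  then have R': "\<And>p q. 0 < p \<Longrightarrow> R' p q = 0" and X': "X = ser_add (ser_mult Q' (a_minus_lb l)) R'"
    by (auto simp: in_B_def)
  show "Q' = quot_a_minus_lb X l" by (rule division_by_a_minus_lb_unique(1)[OF R' X'])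
  show "R' = rem_a_minus_lb X l" by (rule division_by_a_minus_lb_unique(2)[OF R' X'])
qed

end
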